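(* Let $H\ge1$, $s\ge1$ be integers, $\Psi$ a positive integer with $\Psi/s^H\in\mathbb{Z}^+$, $q>0$, $\rho\in(0,1]$, and $w_1,\dots,w_s$ fixed real numbers. Let $\{X^{(j)}_{i_1,\dots,i_H}: i_1,\dots,i_H\in\{1,\dots,s\},\ j\ge1\}$ be independent $N(0,1)$ random variables. Let $t_{i_1,\dots,i_H}\in\mathbb{Z}_{\ge0}$ be nonnegative integers with $\sum_{i_1,\dots,i_H=1}^s t_{i_1,\dots,i_H}=\Psi$, and suppose the uniformity assumption holds: there is a constant $c\ge1$ such that for all $(i_1,\dots,i_H)\in\{1,\dots,s\}^H$, \[ \frac1c\cdot\frac{\Psi}{s^H}\le t_{i_1,\dots,i_H}\le c\cdot\frac{\Psi}{s^H}. \] Define \[ Y_s=q\sum_{i_1,\dots,i_H=1}^{s}\sum_{j=1}^{t_{i_1,\dots,i_H}}X^{(j)}_{i_1,\dots,i_H}\rho\prod_{k=1}^H w_{i_k},\qquad \hat Y_s=q\sum_{i_1,\dots,i_H=1}^{s}\sum_{j=1}^{\Psi/s^H}X^{(j)}_{i_1,\dots,i_H}\rho\prod_{k=1}^H w_{i_k}. \] Then $\mathrm{corr}(\hat Y_s,Y_s)\ge \frac{1}{c^2}$.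
   Context: $\mathrm{corr}(A,B)=\frac{\mathbb{E}[(A-\mathbb{E}A)(B-\mathbb{E}B)]}{\mathrm{std}(A)\,\mathrm{std}(B)}$. In the paper's setting, $Y_s$ is the expected output of a network whose weights take $s$ distinct values $w_1,\dots,w_s$, $t_{i_1,\dots,i_H}$ is the number of input-to-output paths whose ordered weight sequence is $(w_{i_1},\dots,w_{i_H})$, $\Psi$ is the total number of paths, and both $Y_s$ and $\hat Y_s$ are built from the same family of Gaussian variables $X^{(j)}_{i_1,\dots,i_H}$. *)

theory Defs
  imports "HOL-Probability.Probability"
begin

definition corr :: "'a measure \<Rightarrow> ('a \<Rightarrow> real) \<Rightarrow> ('a \<Rightarrow> real) \<Rightarrow> real" where
  "corr M A B =
     (\<integral>x. (A x - (\<integral>y. A y \<partial>M)) * (B x - (\<integral>y. B y \<partial>M)) \<partial>M) /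
     (sqrt (\<integral>x. (A x - (\<integral>y. A y \<partial>M))\<^sup>2 \<partial>M) * sqrt (\<integral>x. (B x - (\<integral>y. B y \<partial>M))\<^sup>2 \<partial>M))"

definition idx :: "nat \<Rightarrow> nat \<Rightarrow> nat list set" where
  "idx H s = {xs. length xs = H \<and> set xs \<subseteq> {1..s}}"

end

theory Submission imports Defs begin

text \<open>Only second moments enter a correlation, so the Gaussian hypotheses serve solely to
  make the variables \<open>X xs j\<close> centred and orthonormal in \<open>L\<^sup>2\<close>. Both outputs are linear
  combinations of this family with the same coefficient \<open>e xs = q \<rho> \<Prod> w\<close> on \<open>X xs j\<close>, so the
  covariance only counts the shared terms, \<open>\<Sum> (e xs)\<^sup>2 min m (t xs)\<close> with \<open>m = \<Psi> / s\<^sup>H\<close>, while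
  the variances are \<open>\<Sum> (e xs)\<^sup>2 m\<close> and \<open>\<Sum> (e xs)\<^sup>2 t xs\<close>. The uniformity assumption
  \<open>m / c \<le> t xs \<le> c m\<close> then bounds the correlation below by \<open>1 / (c \<surd>c) \<ge> 1 / c\<^sup>2\<close>.\<close>

context prob_space
begin

definition orthonormal_centered :: "('i \<Rightarrow> 'a \<Rightarrow> real) \<Rightarrow> 'i set \<Rightarrow> bool" where
  "orthonormal_centered Z I \<longleftrightarrow>
     (\<forall>i\<in>I. integrable M (Z i) \<and> expectation (Z i) = 0) \<and>
     (\<forall>i\<in>I. \<forall>k\<in>I. integrable M (\<lambda>x. Z i x * Z k x) \<and>
        expectation (\<lambda>x. Z i x * Z k x) = (if i = k then 1 else 0))"

lemma std_normal_moments: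
  assumes D: "distributed M lborel Z std_normal_density"
  shows "integrable M Z" "expectation Z = 0"
    and "integrable M (\<lambda>x. Z x * Z x)" "expectation (\<lambda>x. Z x * Z x) = 1"
proof -
  have "integrable lborel (\<lambda>x. std_normal_density x * x)"
    using integrable_std_normal_moment[of 1] by simp
  then show "integrable M Z"
    using distributed_integrable[OF D, of "\<lambda>x. x"] by simp
  show "expectation Z = 0"
    using standard_normal_distributed_expectation[OF D] by simp
  have "integrable lborel (\<lambda>x. std_normal_density x * (x * x))"
    using integrable_std_normal_moment[of 2] by (simp add: power2_eq_square)
  then show "integrable M (\<lambda>x. Z x * Z x)"
    using distributed_integrable[OF D, of "\<lambda>x. x * x"] by simp
  have "(\<integral>x. std_normal_density x * (x * x) \<partial>lborel) = 1"
    using integral_std_normal_moment_even[of 1] by (simp add: power2_eq_square)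
  then show "expectation (\<lambda>x. Z x * Z x) = 1"
    using distributed_integral[OF D, of "\<lambda>x. x * x"] by simp
qed

lemma indep_vars_integral_mult_pair:
  fixes Z :: "'i \<Rightarrow> 'a \<Rightarrow> real"
  assumes ind: "indep_vars (\<lambda>_. borel) Z I" and "i \<in> I" "k \<in> I" "i \<noteq> k"
    and "integrable M (Z i)" "integrable M (Z k)"
  shows "integrable M (\<lambda>x. Z i x * Z k x)"
    and "expectation (\<lambda>x. Z i x * Z k x) = expectation (Z i) * expectation (Z k)"
proof -
  have ind2: "indep_vars (\<lambda>_. borel) Z {i, k}"
    using indep_vars_subset[OF ind] assms by auto
  have int: "\<And>j. j \<in> {i, k} \<Longrightarrow> integrable M (Z j)" using assms by auto
  show "integrable M (\<lambda>x. Z i x * Z k x)"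
    using indep_vars_integrable[OF _ ind2 int] assms by simp
  show "expectation (\<lambda>x. Z i x * Z k x) = expectation (Z i) * expectation (Z k)"
    using indep_vars_lebesgue_integral[OF _ ind2 int] assms by simp
qed

lemma indep_std_normal_orthonormal_centered:
  fixes Z :: "'i \<Rightarrow> 'a \<Rightarrow> real"
  assumes ind: "indep_vars (\<lambda>_. borel) Z I"
    and D: "\<And>i. i \<in> I \<Longrightarrow> distributed M lborel (Z i) std_normal_density"
  shows "orthonormal_centered Z I"
proof -
  have "integrable M (\<lambda>x. Z i x * Z k x) \<and>
        expectation (\<lambda>x. Z i x * Z k x) = (if i = k then 1 else 0)" if ik: "i \<in> I" "k \<in> I" for i k
  proof (cases "i = k")
    case False
    note Fi = std_normal_moments[OF D[OF ik(1)]] and Fk = std_normal_moments[OF D[OF ik(2)]]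
    show ?thesis
      using indep_vars_integral_mult_pair[OF ind ik False Fi(1) Fk(1)] Fi(2) False by simp
  qed (use std_normal_moments[OF D[OF ik(1)]] in simp)
  then show ?thesis
    by (auto simp: orthonormal_centered_def intro: std_normal_moments D)
qed

lemma orthonormal_centered_expectation_lin_comb:
  assumes "orthonormal_centered Z I" "A \<subseteq> I"
  shows "expectation (\<lambda>x. \<Sum>i\<in>A. f i * Z i x) = 0"
  using assms by (auto simp: orthonormal_centered_def integral_sum subsetD)

lemma orthonormal_centered_expectation_lin_comb_mult:
  assumes ON: "orthonormal_centered Z I"
    and fin: "finite A" "finite B" and sub: "A \<subseteq> I" "B \<subseteq> I"
  shows "expectation (\<lambda>x. (\<Sum>i\<in>A. f i * Z i x) * (\<Sum>k\<in>B. g k * Z k x)) = (\<Sum>i\<in>A\<inter>B. f i * g i)"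
proof -
  have sq: "integrable M (\<lambda>x. Z i x * Z k x)"
    "expectation (\<lambda>x. Z i x * Z k x) = (if i = k then 1 else 0)" if "i \<in> A" "k \<in> B" for i k
    using ON subsetD[OF sub(1) that(1)] subsetD[OF sub(2) that(2)]
    by (auto simp: orthonormal_centered_def)
  have "(\<lambda>x. (\<Sum>i\<in>A. f i * Z i x) * (\<Sum>k\<in>B. g k * Z k x)) =
        (\<lambda>x. \<Sum>i\<in>A. \<Sum>k\<in>B. (f i * g k) * (Z i x * Z k x))"
    by (simp add: sum_product algebra_simps)
  then have "expectation (\<lambda>x. (\<Sum>i\<in>A. f i * Z i x) * (\<Sum>k\<in>B. g k * Z k x)) =
      (\<Sum>i\<in>A. \<Sum>k\<in>B. (f i * g k) * expectation (\<lambda>x. Z i x * Z k x))"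
    using sq by (simp add: integral_sum)
  also have "\<dots> = (\<Sum>i\<in>A. \<Sum>k\<in>B. if i = k then f i * g k else 0)"
    using sq by (intro sum.cong refl) auto
  also have "\<dots> = (\<Sum>i\<in>A. if i \<in> B then f i * g i else 0)"
    using fin by (simp add: sum.delta)
  also have "\<dots> = (\<Sum>i\<in>A\<inter>B. f i * g i)"
    using fin by (simp add: sum.inter_restrict)
  finally show ?thesis .
qed

lemma corr_lin_comb:
  assumes ON: "orthonormal_centered Z I"
    and fin: "finite A" "finite B" and sub: "A \<subseteq> I" "B \<subseteq> I"
  shows "corr M (\<lambda>x. \<Sum>i\<in>A. f i * Z i x) (\<lambda>x. \<Sum>i\<in>B. f i * Z i x) =
    (\<Sum>i\<in>A\<inter>B. (f i)\<^sup>2) / (sqrt (\<Sum>i\<in>A. (f i)\<^sup>2) * sqrt (\<Sum>i\<in>B. (f i)\<^sup>2))"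
proof -
  have cov: "expectation (\<lambda>x. (\<Sum>i\<in>C. f i * Z i x) * (\<Sum>k\<in>D. f k * Z k x)) = (\<Sum>i\<in>C\<inter>D. (f i)\<^sup>2)"
    if "C \<in> {A, B}" "D \<in> {A, B}" for C D
    using orthonormal_centered_expectation_lin_comb_mult[OF ON, of C D f f] fin sub that
    by (auto simp: power2_eq_square)
  show ?thesis
    using cov[of A B] cov[of A A] cov[of B B]
    by (simp add: corr_def orthonormal_centered_expectation_lin_comb[OF ON] sub power2_eq_square)
qed

lemma corr_nested_lin_comb:
  fixes X :: "'k \<Rightarrow> nat \<Rightarrow> 'a \<Rightarrow> real"
  assumes ON: "orthonormal_centered (\<lambda>(k, j). X k j) (K \<times> {1..})" and "finite K"
  shows "corr M (\<lambda>x. \<Sum>k\<in>K. \<Sum>j\<in>{1..m k}. e k * X k j x) (\<lambda>x. \<Sum>k\<in>K. \<Sum>j\<in>{1..t k}. e k * X k j x) =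
    (\<Sum>k\<in>K. (e k)\<^sup>2 * real (min (m k) (t k))) /
      (sqrt (\<Sum>k\<in>K. (e k)\<^sup>2 * real (m k)) * sqrt (\<Sum>k\<in>K. (e k)\<^sup>2 * real (t k)))"
proof -
  let ?S = "\<lambda>g :: 'k \<Rightarrow> nat. Sigma K (\<lambda>k. {1..g k})"
  have nested: "(\<Sum>k\<in>K. \<Sum>j\<in>{1..g k}. F k j) = (\<Sum>p\<in>?S g. F (fst p) (snd p))"
    for g and F :: "'k \<Rightarrow> nat \<Rightarrow> real"
    using sum.Sigma[OF \<open>finite K\<close>, of "\<lambda>k. {1..g k}" F] by (simp add: split_def)
  have square_sum: "(\<Sum>p\<in>?S g. (e (fst p))\<^sup>2) = (\<Sum>k\<in>K. (e k)\<^sup>2 * real (g k))" for g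
    using nested[of "\<lambda>k j. (e k)\<^sup>2" g] by (simp add: mult.commute)
  have "?S m \<inter> ?S t = ?S (\<lambda>k. min (m k) (t k))" by auto
  moreover have "finite (?S g)" "?S g \<subseteq> K \<times> {1..}" for g
    using \<open>finite K\<close> by auto
  ultimately show ?thesis
    unfolding nested[of "\<lambda>k j. e k * X k j _"]
    using corr_lin_comb[OF ON, of "?S m" "?S t" "\<lambda>p. e (fst p)"]
    by (simp add: square_sum[simplified] split_def)
qed

end

lemma weighted_overlap_ratio_ge:
  fixes a t :: "'k \<Rightarrow> real"
  assumes "finite K" and a_nonneg: "\<And>k. k \<in> K \<Longrightarrow> a k \<ge> 0" and "(\<Sum>k\<in>K. a k) > 0"
    and "m > 0" and "c \<ge> 1" and t_bounds: "\<And>k. k \<in> K \<Longrightarrow> m / c \<le> t k \<and> t k \<le> c * m"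
  shows "1 / (c * sqrt c) \<le>
    (\<Sum>k\<in>K. a k * min m (t k)) / (sqrt (\<Sum>k\<in>K. a k * m) * sqrt (\<Sum>k\<in>K. a k * t k))"
proof -
  define T where "T = (\<Sum>k\<in>K. a k) * m"
  define N where "N = (\<Sum>k\<in>K. a k * min m (t k))"
  define V where "V = (\<Sum>k\<in>K. a k * t k)"
  have "T > 0" "c > 0" using assms by (simp_all add: T_def)
  have "T / c = (\<Sum>k\<in>K. a k * (m / c))"
    by (simp add: T_def sum_distrib_right sum_divide_distrib)
  also have "\<dots> \<le> N"
    unfolding N_def
  proof (rule sum_mono, rule mult_left_mono)
    fix k assume "k \<in> K"
    then show "m / c \<le> min m (t k)"
      using t_bounds assms(4,5) by (simp add: divide_le_eq)
  qed (use a_nonneg in simp)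
  finally have NT: "T / c \<le> N" .
  have "V \<le> (\<Sum>k\<in>K. a k * (c * m))"
    unfolding V_def by (intro sum_mono mult_left_mono) (use a_nonneg t_bounds in auto)
  also have "\<dots> = c * T" by (simp add: T_def sum_distrib_right sum_distrib_left algebra_simps)
  finally have VT: "V \<le> c * T" .
  have "N \<le> V" unfolding N_def V_def by (intro sum_mono mult_left_mono) (use a_nonneg in auto)
  moreover have "T / c > 0" using \<open>T > 0\<close> \<open>c > 0\<close> by simp
  ultimately have "N > 0" "V > 0" using NT by linarith+
  have "1 / (c * sqrt c) = (T / c) / (sqrt T * sqrt (c * T))"
    using \<open>T > 0\<close> \<open>c > 0\<close> by (simp add: real_sqrt_mult field_simps)
  also have "\<dots> \<le> N / (sqrt T * sqrt V)"
    using NT VT \<open>T / c > 0\<close> \<open>T > 0\<close> \<open>N > 0\<close> \<open>V > 0\<close> \<open>c > 0\<close>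
    by (intro frac_le mult_left_mono) auto
  finally show ?thesis by (simp add: N_def V_def T_def sum_distrib_right)
qed

lemma inverse_square_le_inverse_mult_sqrt:
  fixes c :: real
  assumes "c \<ge> 1"
  shows "1 / c\<^sup>2 \<le> 1 / (c * sqrt c)"
proof -
  have "sqrt c \<le> c" using assms real_sqrt_le_mono[of c "c\<^sup>2"] by (simp add: power2_eq_square)
  then have "c * sqrt c \<le> c\<^sup>2" using assms by (simp add: power2_eq_square)
  then show ?thesis using assms by (simp add: frac_le)
qed

lemma finite_idx: "finite (idx H s)"
  using finite_lists_length_eq[of "{1..s}" H] by (simp add: idx_def conj_commute)

lemma sum_idx_square_prod_list_pos:
  fixes d :: real and w :: "nat \<Rightarrow> real"
  assumes "d \<noteq> 0" "i \<in> {1..s}" "w i \<noteq> 0"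
  shows "(\<Sum>xs\<in>idx H s. (d * prod_list (map w xs))\<^sup>2) > 0"
proof -
  have "replicate H i \<in> idx H s" using assms by (auto simp: idx_def)
  moreover have "d * prod_list (map w (replicate H i)) \<noteq> 0"
    using assms by (simp add: prod_list_replicate)
  ultimately show ?thesis
    using finite_idx by (intro sum_pos2) (auto simp del: mult_eq_0_iff)
qed

theorem theorem3p3:
  fixes M :: "'a measure"
    and H s \<Psi> :: nat
    and q \<rho> c :: real
    and w :: "nat \<Rightarrow> real"
    and X :: "nat list \<Rightarrow> nat \<Rightarrow> 'a \<Rightarrow> real"
    and t :: "nat list \<Rightarrow> nat"
  assumes "prob_space M"
    and "H \<ge> 1" and "s \<ge> 1"
    and "\<Psi> > 0" and "s ^ H dvd \<Psi>"
    and "q > 0" and "0 < \<rho>" and "\<rho> \<le> 1"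
    and "\<exists>i\<in>{1..s}. w i \<noteq> 0"
    and "prob_space.indep_vars M (\<lambda>_. borel) (\<lambda>(xs, j). X xs j) (idx H s \<times> {1..})"
    and "\<And>xs j. xs \<in> idx H s \<Longrightarrow> j \<ge> 1 \<Longrightarrow> distributed M lborel (X xs j) std_normal_density"
    and "(\<Sum>xs\<in>idx H s. t xs) = \<Psi>"
    and "c \<ge> 1"
    and "\<And>xs. xs \<in> idx H s \<Longrightarrow>
           1 / c * (real \<Psi> / real s ^ H) \<le> real (t xs) \<and> real (t xs) \<le> c * (real \<Psi> / real s ^ H)"
  shows "corr M
     (\<lambda>x. q * (\<Sum>xs\<in>idx H s. \<Sum>j\<in>{1..\<Psi> div s ^ H}. X xs j x * \<rho> * prod_list (map w xs)))
     (\<lambda>x. q * (\<Sum>xs\<in>idx H s. \<Sum>j\<in>{1..t xs}. X xs j x * \<rho> * prod_list (map w xs)))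
     \<ge> 1 / c ^ 2"
proof -
  interpret prob_space M by fact
  define e where "e xs = q * \<rho> * prod_list (map w xs)" for xs
  define m where "m = real \<Psi> / real s ^ H"
  have m_eq: "real (\<Psi> div s ^ H) = m" using assms(5) by (simp add: m_def real_of_nat_div)
  have ON: "orthonormal_centered (\<lambda>(xs, j). X xs j) (idx H s \<times> {1..})"
    using assms(10,11) by (intro indep_std_normal_orthonormal_centered) auto
  have lin_comb: "q * (\<Sum>xs\<in>idx H s. \<Sum>j\<in>{1..g xs}. X xs j x * \<rho> * prod_list (map w xs)) =
      (\<Sum>xs\<in>idx H s. \<Sum>j\<in>{1..g xs}. e xs * X xs j x)" for g x
    by (simp add: e_def sum_distrib_left algebra_simps)
  have weight_pos: "(\<Sum>xs\<in>idx H s. (e xs)\<^sup>2) > 0"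
    using assms(6,7,9) sum_idx_square_prod_list_pos[of "q * \<rho>"] by (auto simp: e_def)
  have "1 / c ^ 2 \<le> 1 / (c * sqrt c)"
    using assms(13) by (rule inverse_square_le_inverse_mult_sqrt)
  also have "\<dots> \<le> (\<Sum>xs\<in>idx H s. (e xs)\<^sup>2 * min m (real (t xs))) /
      (sqrt (\<Sum>xs\<in>idx H s. (e xs)\<^sup>2 * m) * sqrt (\<Sum>xs\<in>idx H s. (e xs)\<^sup>2 * real (t xs)))"
    using assms(3,4,13,14) weight_pos
    by (intro weighted_overlap_ratio_ge) (auto simp: finite_idx m_def mult.commute)
  finally show ?thesis
    unfolding lin_comb
    using corr_nested_lin_comb[OF ON finite_idx, where m = "\<lambda>_. \<Psi> div s ^ H" and e = e and t = t]
    by (simp add: m_eq of_nat_min)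
qed

end
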